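(* Let $n\geq 1$ be an integer and $\gamma$ a real number with $0<\gamma\leq 1/64$ and $n+2\leq \gamma^{-1/2}/16$. Let $\lambda=\sqrt{8}+\gamma$ and $\Delta=\sqrt{\lambda^2-8}$. Then $\Delta\leq 4\sqrt{\gamma}$, and for every integer $i$ with $0\leq i\leq n+2$: (1) $0<\frac{2\Delta}{\lambda+\Delta}<\frac{2\Delta}{\lambda-\Delta}<\frac{1}{2(n+2)}$; (2) $1+\frac{i\Delta}{\lambda-\Delta}\leq\left(\frac{\lambda+\Delta}{\lambda-\Delta}\right)^i\leq 1+\frac{4i\Delta}{\lambda-\Delta}$; (3) $1-\frac{4i\Delta}{\lambda+\Delta}\leq\left(\frac{\lambda-\Delta}{\lambda+\Delta}\right)^i\leq 1-\frac{i\Delta}{\lambda+\Delta}$; (4) $1+\frac{1}{2(n+1)}\leq \dfrac{1-\left(\frac{\lambda+\Delta}{\lambda-\Delta}\right)^{n+2}}{1-\left(\frac{\lambda+\Delta}{\lambda-\Delta}\right)^{n+1}}\leq 1+\frac{4}{n+1}$. *)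

theory Defs
  imports Complex_Main
begin

end

(* Put x = 2 Delta / (lam - Delta) and y = 2 Delta / (lam + Delta), so that the two ratios are
   1 + x and 1 - y with 0 < y < x. Since lam^2 - 8 = 2 sqrt 8 gam + gam^2, we get
   Delta <= 4 sqrt gam and lam - Delta > 2, hence x < Delta, and the hypothesis on n makes
   (n + 2) x < 1/4. In this regime Bernoulli's inequality and its reverse for small arguments,
   1 + i x <= (1 + x)^i <= 1 + 2 i x and 1 - i y <= (1 - y)^i <= 1 - i y / 2, give (1)-(3);
   applied to R = (1 + x)^(n+1) they give (4). *)

theory Submission
  imports Defs
begin

lemma power_one_plus_le_linear:
  fixes x :: "'a::linordered_field"
  assumes "0 \<le> x" and "of_nat k * x \<le> 1/2"
  shows "(1 + x) ^ k \<le> 1 + 2 * of_nat k * x"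
  using assms(2)
proof (induction k)
  case 0
  then show ?case by simp
next
  case (Suc k)
  have kx: "of_nat k * x \<le> 1/2"
    using Suc.prems assms(1) by (simp add: algebra_simps)
  have "2 * of_nat k * x * x \<le> x"
    using mult_right_mono[of "2 * of_nat k * x" 1 x] kx assms(1) by simp
  have "(1 + x) ^ Suc k = (1 + x) ^ k * (1 + x)" by simp
  also have "\<dots> \<le> (1 + 2 * of_nat k * x) * (1 + x)"
    using Suc.IH[OF kx] assms(1) by (intro mult_right_mono) auto
  also have "\<dots> \<le> 1 + 2 * of_nat (Suc k) * x"
    using \<open>2 * of_nat k * x * x \<le> x\<close> by (simp add: algebra_simps)
  finally show ?case .
qed

lemma power_one_minus_le_linear:
  fixes y :: "'a::linordered_field"
  assumes "0 \<le> y" and "y \<le> 1" and "of_nat k * y \<le> 1"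
  shows "(1 - y) ^ k \<le> 1 - of_nat k * y / 2"
  using assms(3)
proof (induction k)
  case 0
  then show ?case by simp
next
  case (Suc k)
  have ky: "of_nat k * y \<le> 1"
    using Suc.prems assms(1) by (simp add: algebra_simps)
  have "of_nat k * y * y \<le> y"
    using mult_right_mono[of "of_nat k * y" 1 y] ky assms(1) by simp
  have "(1 - y) ^ Suc k = (1 - y) ^ k * (1 - y)" by simp
  also have "\<dots> \<le> (1 - of_nat k * y / 2) * (1 - y)"
    using Suc.IH[OF ky] assms(2) by (intro mult_right_mono) auto
  also have "\<dots> \<le> 1 - of_nat (Suc k) * y / 2"
    using \<open>of_nat k * y * y \<le> y\<close> by (simp add: field_simps)
  finally show ?case .
qed

lemma power_add_div_diff_bounds:
  fixes a b :: "'a::linordered_field"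
  assumes "0 < b" and "b < a" and "of_nat i * (2 * b / (a - b)) \<le> 1/2"
  shows "1 + of_nat i * b / (a - b) \<le> ((a + b) / (a - b)) ^ i"
    and "((a + b) / (a - b)) ^ i \<le> 1 + 4 * of_nat i * b / (a - b)"
proof -
  define x where "x = 2 * b / (a - b)"
  have "0 < x" using assms(1,2) by (simp add: x_def)
  have ratio: "(a + b) / (a - b) = 1 + x"
    using assms(2) by (simp add: x_def field_simps)
  have "1 + of_nat i * b / (a - b) \<le> 1 + of_nat i * x"
    using assms(1,2) by (simp add: x_def divide_right_mono)
  also have "\<dots> \<le> (1 + x) ^ i"
    using Bernoulli_inequality[of x i] \<open>0 < x\<close> by simp
  finally show "1 + of_nat i * b / (a - b) \<le> ((a + b) / (a - b)) ^ i"
    by (simp add: ratio)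
  have "(1 + x) ^ i \<le> 1 + 2 * of_nat i * x"
    using power_one_plus_le_linear[of x i] \<open>0 < x\<close> assms(3) by (simp add: x_def)
  then show "((a + b) / (a - b)) ^ i \<le> 1 + 4 * of_nat i * b / (a - b)"
    by (simp add: ratio x_def)
qed

lemma power_diff_div_add_bounds:
  fixes a b :: "'a::linordered_field"
  assumes "0 < b" and "b \<le> a" and "of_nat i * (2 * b / (a + b)) \<le> 1"
  shows "1 - 4 * of_nat i * b / (a + b) \<le> ((a - b) / (a + b)) ^ i"
    and "((a - b) / (a + b)) ^ i \<le> 1 - of_nat i * b / (a + b)"
proof -
  define y where "y = 2 * b / (a + b)"
  have "0 < y" and "y \<le> 1" using assms(1,2) by (simp_all add: y_def field_simps)
  have ratio: "(a - b) / (a + b) = 1 - y"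
    using assms(1,2) by (simp add: y_def field_simps)
  have "1 - 4 * of_nat i * b / (a + b) \<le> 1 - of_nat i * y"
    using assms(1,2) by (simp add: y_def field_simps)
  also have "\<dots> \<le> (1 - y) ^ i"
    using Bernoulli_inequality[of "- y" i] \<open>y \<le> 1\<close> by simp
  finally show "1 - 4 * of_nat i * b / (a + b) \<le> ((a - b) / (a + b)) ^ i"
    by (simp add: ratio)
  have "(1 - y) ^ i \<le> 1 - of_nat i * y / 2"
    using power_one_minus_le_linear[of y i] \<open>0 < y\<close> \<open>y \<le> 1\<close> assms(3) by (simp add: y_def)
  moreover have "of_nat i * y / 2 = of_nat i * b / (a + b)"
    using assms(1,2) by (simp add: y_def field_simps)
  ultimately show "((a - b) / (a + b)) ^ i \<le> 1 - of_nat i * b / (a + b)"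
    by (simp add: ratio)
qed

text \<open>With \<open>R = (1 + x)^m\<close> the quotient equals \<open>1 + R x / (R - 1)\<close>, and
  Bernoulli's inequality together with \<open>R \<le> 1 + 2 m x \<le> 2\<close> pins \<open>R - 1\<close> between
  \<open>m x\<close> and \<open>2 m x\<close>.\<close>

lemma geometric_quotient_bounds:
  fixes x :: "'a::linordered_field"
  assumes "0 < x" and "0 < m" and "of_nat m * x \<le> 1/2"
  shows "1 + 1 / (2 * of_nat m) \<le> (1 - (1 + x) ^ (m + 1)) / (1 - (1 + x) ^ m)"
    and "(1 - (1 + x) ^ (m + 1)) / (1 - (1 + x) ^ m) \<le> 1 + 2 / of_nat m"
proof -
  define R where "R = (1 + x) ^ m"
  have mx: "0 < of_nat m * x" using assms(1,2) by simp
  have R_lower: "1 + of_nat m * x \<le> R"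
    unfolding R_def using Bernoulli_inequality[of x m] assms(1) by simp
  have R_upper: "R \<le> 1 + 2 * of_nat m * x"
    unfolding R_def using power_one_plus_le_linear[of x m] assms(1,3) by simp
  have "0 < R - 1" using R_lower mx by simp
  have quotient: "(1 - (1 + x) ^ (m + 1)) / (1 - (1 + x) ^ m) = 1 + R * x / (R - 1)"
    using \<open>0 < R - 1\<close> by (simp add: R_def[symmetric] field_simps)
  have "1 / (2 * of_nat m) = x / (2 * of_nat m * x)"
    using assms(1) by simp
  also have "\<dots> \<le> R * x / (R - 1)"
    using assms(1) \<open>0 < R - 1\<close> R_upper by (intro frac_le) auto
  finally show "1 + 1 / (2 * of_nat m) \<le> (1 - (1 + x) ^ (m + 1)) / (1 - (1 + x) ^ m)"
    unfolding quotient by simp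
  have "R * x / (R - 1) \<le> 2 * x / (of_nat m * x)"
    using assms(1,3) mx R_lower R_upper by (intro frac_le) auto
  also have "\<dots> = 2 / of_nat m"
    using assms(1) by simp
  finally show "(1 - (1 + x) ^ (m + 1)) / (1 - (1 + x) ^ m) \<le> 1 + 2 / of_nat m"
    unfolding quotient by simp
qed

lemma sqrt8_perturbation_bounds:
  fixes gam lam Delta :: real
  assumes "0 < gam" and "gam \<le> 1/64"
    and "lam = sqrt 8 + gam" and "Delta = sqrt (lam^2 - 8)"
  shows "0 < Delta" and "Delta \<le> 4 * sqrt gam" and "2 < lam - Delta"
    and "2 * Delta / (lam - Delta) < 4 * sqrt gam" and "Delta < lam"
proof -
  have sqrt8_sq: "sqrt 8 ^ 2 = (8::real)" by simp
  have "5/2 < sqrt (8::real)"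
    by (rule real_less_rsqrt) (simp add: power2_eq_square)
  have "sqrt (8::real) < 3"
    by (rule real_less_lsqrt) simp_all
  have Delta_sq: "lam^2 - 8 = 2 * sqrt 8 * gam + gam^2"
    using assms(3) sqrt8_sq by (simp add: power2_eq_square algebra_simps)
  then show "0 < Delta"
    using assms(1,4) by (simp add: add_pos_pos)
  have "gam^2 \<le> gam"
    using assms(1,2) by (simp add: power2_eq_square mult_le_one)
  moreover have "2 * sqrt 8 * gam \<le> 6 * gam"
    using \<open>sqrt 8 < 3\<close> assms(1) by (intro mult_right_mono) auto
  moreover have "(4 * sqrt gam)^2 = 16 * gam"
    using assms(1) by (simp add: power_mult_distrib)
  ultimately have "lam^2 - 8 \<le> (4 * sqrt gam)^2"
    using Delta_sq assms(1) by linarith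
  then show "Delta \<le> 4 * sqrt gam"
    using assms(1,4) by (simp add: real_le_lsqrt)
  have "sqrt gam \<le> 1/8"
    using assms(2) real_sqrt_le_mono[of gam "1/64"] by (simp add: real_sqrt_divide)
  then show "2 < lam - Delta"
    using assms(1,3) \<open>5/2 < sqrt 8\<close> \<open>Delta \<le> 4 * sqrt gam\<close> by linarith
  then show "Delta < lam"
    using \<open>0 < Delta\<close> by linarith
  have "2 * Delta < Delta * (lam - Delta)"
    using \<open>0 < Delta\<close> \<open>2 < lam - Delta\<close> by simp
  then have "2 * Delta / (lam - Delta) < Delta"
    using \<open>2 < lam - Delta\<close> by (simp add: pos_divide_less_eq)
  then show "2 * Delta / (lam - Delta) < 4 * sqrt gam"
    using \<open>Delta \<le> 4 * sqrt gam\<close> by linarith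
qed

theorem claim1:
  fixes n :: nat and gam lam Delta :: real
  assumes "n \<ge> 1"
    and "0 < gam" and "gam \<le> 1/64"
    and "real n + 2 \<le> (1 / sqrt gam) / 16"
    and "lam = sqrt 8 + gam"
    and "Delta = sqrt (lam^2 - 8)"
  shows "Delta \<le> 4 * sqrt gam \<and>
    (\<forall>i::nat. i \<le> n + 2 \<longrightarrow>
      (0 < 2*Delta/(lam+Delta) \<and> 2*Delta/(lam+Delta) < 2*Delta/(lam-Delta)
        \<and> 2*Delta/(lam-Delta) < 1 / (2 * (real n + 2)))
      \<and> (1 + real i * Delta/(lam-Delta) \<le> ((lam+Delta)/(lam-Delta))^i
        \<and> ((lam+Delta)/(lam-Delta))^i \<le> 1 + 4 * real i * Delta/(lam-Delta))
      \<and> (1 - 4 * real i * Delta/(lam+Delta) \<le> ((lam-Delta)/(lam+Delta))^i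
        \<and> ((lam-Delta)/(lam+Delta))^i \<le> 1 - real i * Delta/(lam+Delta))
      \<and> (1 + 1 / (2 * (real n + 1)) \<le>
            (1 - ((lam+Delta)/(lam-Delta))^(n+2)) / (1 - ((lam+Delta)/(lam-Delta))^(n+1))
        \<and> (1 - ((lam+Delta)/(lam-Delta))^(n+2)) / (1 - ((lam+Delta)/(lam-Delta))^(n+1))
            \<le> 1 + 4 / (real n + 1)))"
proof -
  note Delta = sqrt8_perturbation_bounds[OF assms(2,3,5,6)]
  define x where "x = 2 * Delta / (lam - Delta)"
  define y where "y = 2 * Delta / (lam + Delta)"
  have "0 < y" and "y < x"
    using Delta(1,3) by (simp_all add: x_def y_def divide_strict_left_mono)
  have "(real n + 2) * x < (real n + 2) * (4 * sqrt gam)"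
    using Delta(4) by (intro mult_strict_left_mono) (simp_all add: x_def)
  also have "\<dots> \<le> 1/4"
    using assms(2,4) by (simp add: field_simps)
  finally have x_small: "(real n + 2) * x < 1/4" .
  have ix: "real i * x \<le> 1/2" and iy: "real i * y \<le> 1" if "i \<le> n + 2" for i
  proof -
    have "real i * y \<le> real i * x" and "real i * x \<le> (real n + 2) * x"
      using \<open>0 < y\<close> \<open>y < x\<close> that by (simp_all add: mult_left_mono mult_right_mono)
    then show "real i * x \<le> 1/2" and "real i * y \<le> 1"
      using x_small by linarith+
  qed
  have ratio: "(lam + Delta) / (lam - Delta) = 1 + x"
    using Delta(3) by (simp add: x_def field_simps)
  have "0 < x" and "0 < n + 1" and "real (n + 1) * x \<le> 1/2"
    using \<open>0 < y\<close> \<open>y < x\<close> ix[of "n + 1"] by simp_all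
  note geometric_quotient_bounds[OF this, unfolded of_nat_add of_nat_1 add.assoc one_add_one]
  moreover have "2 / (real n + 1) \<le> 4 / (real n + 1)"
    by (simp add: divide_right_mono)
  ultimately have quotient:
    "1 + 1 / (2 * (real n + 1)) \<le>
       (1 - ((lam+Delta)/(lam-Delta))^(n+2)) / (1 - ((lam+Delta)/(lam-Delta))^(n+1))"
    "(1 - ((lam+Delta)/(lam-Delta))^(n+2)) / (1 - ((lam+Delta)/(lam-Delta))^(n+1))
       \<le> 1 + 4 / (real n + 1)"
    unfolding ratio by linarith+
  have "x < 1 / (2 * (real n + 2))"
    using x_small by (simp add: field_simps)
  then show ?thesis
    unfolding x_def[symmetric] y_def[symmetric]
    using Delta(2) \<open>0 < y\<close> \<open>y < x\<close> quotient
      power_add_div_diff_bounds[OF Delta(1) _ ix[unfolded x_def]]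
      power_diff_div_add_bounds[OF Delta(1) _ iy[unfolded y_def]] Delta(5)
    by auto
qed

end
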